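(* Let $\mathbf{X}\subseteq\mathbb{R}_+^n$ be an interval and $\mathrm{IC}(\mathbf{a}_0,\dots,\mathbf{a}_{n-1})$ an interval circulant matrix containing $\hat A$. Then $\mathrm{IC}(\mathbf{a}_0,\dots,\mathbf{a}_{n-1})$ is weakly tolerance $\mathbf{X}$-robust, i.e. there exist $A\in\mathrm{IC}(\mathbf{a}_0,\dots,\mathbf{a}_{n-1})$ and $x\in\mathbf{X}$ with $x\in\mathrm{Attr}(A)$, if and only if the system $\lambda(\hat A)\hat A^{n^2}\otimes x=\hat A^{n^2+1}\otimes x$ has a solution $x\in\mathbf{X}$.
   Context: Max algebra on $\mathbb{R}_+$: $\oplus=\max$, ordinary product, $A^t$ max-algebraic power; $\lambda(A)$ greatest max-algebraic eigenvalue (maximum cycle geometric mean); $\mathrm{Attr}(A)=\{x\in\mathbb{R}_+^n: A^{t+1}\otimes x=\lambda(A)A^t\otimes x\text{ for some }t\ge0\}$. An interval $\mathbf{X}=\prod_i\mathbf{X}_i$ has each $\mathbf{X}_i\subseteq\mathbb{R}_+$ nonempty of one of the forms $[\underline{x}_i,\overline{x}_i]$, $(\underline{x}_i,\overline{x}_i)$, $(\underline{x}_i,\overline{x}_i]$, $[\underline{x}_i,\overline{x}_i)$. $\mathrm{Circ}(a_0,\dots,a_{n-1})$ has entries $A_{i,j}=a_t$, $t\equiv j-i\pmod n$; $\mathrm{IC}(\mathbf{a}_0,\dots,\mathbf{a}_{n-1})$ is the set of all $\mathrm{Circ}(a_0,\dots,a_{n-1})$ with $a_t\in\mathbf{a}_t$,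 each $\mathbf{a}_t\subseteq\mathbb{R}_+$ a nonempty interval of one of the four forms with endpoints $\underline a_t\le\overline a_t$. $\underline a=\max_k\underline a_k$, $\hat A=\mathrm{Circ}(\hat a_0,\dots,\hat a_{n-1})$, $\hat a_i=\min\{\underline a,\overline a_i\}$. *)

theory Defs
  imports Main "HOL-Library.Multiset" Complex_Main
begin

text \<open>Max algebra on nonnegative reals. Matrices of size n are functions
  nat => nat => real (only indices < n matter), vectors are nat => real.\<close>

definition mx_mult_vec :: "nat \<Rightarrow> (nat \<Rightarrow> nat \<Rightarrow> real) \<Rightarrow> (nat \<Rightarrow> real) \<Rightarrow> nat \<Rightarrow> real" where
  "mx_mult_vec n A x = (\<lambda>i. Max ((\<lambda>j. A i j * x j) ` {..<n}))"

definition mx_mult :: "nat \<Rightarrow> (nat \<Rightarrow> nat \<Rightarrow> real) \<Rightarrow> (nat \<Rightarrow> nat \<Rightarrow> real) \<Rightarrow> nat \<Rightarrow> nat \<Rightarrow> real" where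
  "mx_mult n A B = (\<lambda>i j. Max ((\<lambda>k. A i k * B k j) ` {..<n}))"

definition mx_id :: "nat \<Rightarrow> nat \<Rightarrow> real" where
  "mx_id = (\<lambda>i j. if i = j then 1 else 0)"

fun mx_pow :: "nat \<Rightarrow> (nat \<Rightarrow> nat \<Rightarrow> real) \<Rightarrow> nat \<Rightarrow> nat \<Rightarrow> nat \<Rightarrow> real" where
  "mx_pow n A 0 = mx_id"
| "mx_pow n A (Suc t) = mx_mult n A (mx_pow n A t)"

text \<open>Greatest max-algebraic eigenvalue = maximum cycle geometric mean
  (cycles given as index lists of length k, 1 <= k <= n).\<close>
definition mx_lambda :: "nat \<Rightarrow> (nat \<Rightarrow> nat \<Rightarrow> real) \<Rightarrow> real" where
  "mx_lambda n A = Max {root (length cs) (\<Prod>t<length cs. A (cs ! t) (cs ! ((t + 1) mod length cs)))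
      | cs. cs \<noteq> [] \<and> length cs \<le> n \<and> set cs \<subseteq> {..<n}}"

definition attr :: "nat \<Rightarrow> (nat \<Rightarrow> nat \<Rightarrow> real) \<Rightarrow> (nat \<Rightarrow> real) set" where
  "attr n A = {x. (\<forall>i<n. 0 \<le> x i) \<and>
     (\<exists>t. \<forall>i<n. mx_mult_vec n (mx_pow n A (Suc t)) x i
               = mx_lambda n A * mx_mult_vec n (mx_pow n A t) x i)}"

definition circ :: "nat \<Rightarrow> (nat \<Rightarrow> real) \<Rightarrow> nat \<Rightarrow> nat \<Rightarrow> real" where
  "circ n a = (\<lambda>i j. a ((j + n - i) mod n))"

definition itv :: "real \<Rightarrow> real \<Rightarrow> bool \<Rightarrow> bool \<Rightarrow> real set" where
  "itv l u cl cr = {x. (if cl then l \<le> x else l < x) \<and> (if cr then x \<le> u else x < u)}"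

definition nonneg_itv :: "real \<Rightarrow> real \<Rightarrow> bool \<Rightarrow> bool \<Rightarrow> bool" where
  "nonneg_itv l u cl cr \<longleftrightarrow> 0 \<le> l \<and> l \<le> u \<and> itv l u cl cr \<noteq> {}"

definition hat_a :: "nat \<Rightarrow> (nat \<Rightarrow> real) \<Rightarrow> (nat \<Rightarrow> real) \<Rightarrow> nat \<Rightarrow> real" where
  "hat_a n al au = (\<lambda>i. min (Max (al ` {..<n})) (au i))"

end

theory Submission
  imports Defs
begin

text \<open>The (i, j) entry of the k-th max-times power of Circ(w) is the largest product of k
  weights w u whose step sizes u add up to j - i modulo n.  Consequently the greatest eigenvalue
  of Circ(w) is max w, and by pigeonhole Circ(w)^(L+n) = (max w)^n Circ(w)^L as soon as
  L \<ge> n(n-1).  Write H for the matrix hat A and \<mu> = \<lambda>(H).  If x is attracted by some A = Circ(a)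
  from the interval, then \<lambda>(A)^k x \<le> A^k x for all large k; since (\<mu>/\<lambda>(A)) A \<le> H entrywise,
  also \<mu>^k x \<le> H^k x, and periodicity of the normalised powers H^k / \<mu>^k then forces
  H^(n^2+1) x = \<mu> H^(n^2) x.  Conversely H itself witnesses robustness.\<close>

lemma Max_lessThan_ge: "j < n \<Longrightarrow> f j \<le> Max (f ` {..<n :: nat})"
  by (rule Max_ge) auto

lemma Max_lessThan_le_iff: "0 < n \<Longrightarrow> Max (f ` {..<n :: nat}) \<le> b \<longleftrightarrow> (\<forall>j<n. f j \<le> b)"
  by (subst Max_le_iff) auto

lemma Max_lessThan_attained: "0 < n \<Longrightarrow> \<exists>j<n. Max (f ` {..<n :: nat}) = f j"
proof -
  assume "0 < n"
  then have "Max (f ` {..<n}) \<in> f ` {..<n}" by (intro Max_in) auto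
  then show ?thesis by auto
qed

lemma Max_lessThan_mult_left:
  fixes f :: "nat \<Rightarrow> real"
  assumes "0 \<le> c" "0 < n"
  shows "Max ((\<lambda>j. c * f j) ` {..<n}) = c * Max (f ` {..<n})"
proof -
  have "mono ((*) c)" using assms(1) by (simp add: mono_def mult_left_mono)
  moreover have "{..<n} \<noteq> {}" using assms(2) by auto
  ultimately show ?thesis using mono_Max_commute[of "(*) c" "f ` {..<n}"] by (simp add: image_image)
qed

subsection \<open>Max-times products of nonnegative matrices\<close>

lemma mult_vec_ge: "j < n \<Longrightarrow> A i j * x j \<le> mx_mult_vec n A x i"
  unfolding mx_mult_vec_def by (rule Max_lessThan_ge)

lemma mult_vec_le: "0 < n \<Longrightarrow> (\<forall>j<n. A i j * x j \<le> b) \<Longrightarrow> mx_mult_vec n A x i \<le> b"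
  unfolding mx_mult_vec_def by (simp add: Max_lessThan_le_iff)

lemma mult_vec_attained: "0 < n \<Longrightarrow> \<exists>j<n. mx_mult_vec n A x i = A i j * x j"
  unfolding mx_mult_vec_def by (rule Max_lessThan_attained)

lemma mult_vec_cong: "(\<forall>j<n. x j = y j) \<Longrightarrow> mx_mult_vec n A x i = mx_mult_vec n A y i"
  unfolding mx_mult_vec_def by (intro arg_cong[where f = Max] image_cong) auto

lemma mult_vec_scale:
  "0 \<le> c \<Longrightarrow> 0 < n \<Longrightarrow> mx_mult_vec n A (\<lambda>j. c * x j) i = c * mx_mult_vec n A x i"
  using Max_lessThan_mult_left[of c n "\<lambda>j. A i j * x j"]
  by (simp add: mx_mult_vec_def algebra_simps)

lemma mult_vec_scale_mx:
  assumes "0 \<le> c" "0 < n" "\<forall>j<n. B i j = c * A i j"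
  shows "mx_mult_vec n B x i = c * mx_mult_vec n A x i"
proof -
  have "mx_mult_vec n B x i = mx_mult_vec n A (\<lambda>j. c * x j) i"
    unfolding mx_mult_vec_def using assms(3)
    by (intro arg_cong[where f = Max] image_cong) (auto simp: algebra_simps)
  then show ?thesis using assms(1,2) by (simp add: mult_vec_scale)
qed

lemma mult_vec_mono:
  assumes "0 < n" "\<forall>j<n. 0 \<le> A i j" "\<forall>j<n. x j \<le> y j"
  shows "mx_mult_vec n A x i \<le> mx_mult_vec n A y i"
  using assms by (intro mult_vec_le) (auto intro: order_trans[OF mult_left_mono mult_vec_ge])

lemma mult_vec_mono_mx:
  assumes "0 < n" "\<forall>j<n. 0 \<le> x j" "\<forall>j<n. A i j \<le> B i j"
  shows "mx_mult_vec n A x i \<le> mx_mult_vec n B x i"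
  using assms by (intro mult_vec_le) (auto intro: order_trans[OF mult_right_mono mult_vec_ge])

lemma mult_vec_nonneg:
  assumes "0 < n" "\<forall>j<n. 0 \<le> A i j" "\<forall>j<n. 0 \<le> x j"
  shows "0 \<le> mx_mult_vec n A x i"
proof -
  have "0 \<le> A i 0 * x 0" using assms by simp
  also have "\<dots> \<le> mx_mult_vec n A x i" using assms(1) by (rule mult_vec_ge)
  finally show ?thesis .
qed

lemma mult_vec_id: "i < n \<Longrightarrow> 0 \<le> x i \<Longrightarrow> mx_mult_vec n mx_id x i = x i"
  by (intro antisym mult_vec_le)
    (auto simp: mx_id_def intro: mult_vec_ge[of i n mx_id i x, simplified mx_id_def, simplified])

lemma mult_vec_mult:
  assumes n: "0 < n" and A: "\<forall>l<n. 0 \<le> A i l"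
    and P: "\<forall>l<n. \<forall>k<n. 0 \<le> P l k" and x: "\<forall>k<n. 0 \<le> x k"
  shows "mx_mult_vec n (mx_mult n A P) x i = mx_mult_vec n A (mx_mult_vec n P x) i"
proof (rule antisym)
  show "mx_mult_vec n (mx_mult n A P) x i \<le> mx_mult_vec n A (mx_mult_vec n P x) i"
  proof (intro mult_vec_le[OF n] allI impI)
    fix k assume k: "k < n"
    obtain l where l: "l < n" "mx_mult n A P i k = A i l * P l k"
      using Max_lessThan_attained[OF n, of "\<lambda>l. A i l * P l k"] by (auto simp: mx_mult_def)
    have "mx_mult n A P i k * x k = A i l * (P l k * x k)" using l by simp
    also have "\<dots> \<le> A i l * mx_mult_vec n P x l" using A l k by (intro mult_left_mono mult_vec_ge) auto
    also have "\<dots> \<le> mx_mult_vec n A (mx_mult_vec n P x) i" using l(1) by (rule mult_vec_ge)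
    finally show "mx_mult n A P i k * x k \<le> mx_mult_vec n A (mx_mult_vec n P x) i" .
  qed
  show "mx_mult_vec n A (mx_mult_vec n P x) i \<le> mx_mult_vec n (mx_mult n A P) x i"
  proof (intro mult_vec_le[OF n] allI impI)
    fix l assume l: "l < n"
    obtain k where k: "k < n" "mx_mult_vec n P x l = P l k * x k"
      using mult_vec_attained[OF n] by blast
    have "A i l * mx_mult_vec n P x l = (A i l * P l k) * x k" using k by simp
    also have "\<dots> \<le> mx_mult n A P i k * x k"
      using x k l unfolding mx_mult_def by (intro mult_right_mono Max_lessThan_ge) auto
    also have "\<dots> \<le> mx_mult_vec n (mx_mult n A P) x i" using k(1) by (rule mult_vec_ge)
    finally show "A i l * mx_mult_vec n P x l \<le> mx_mult_vec n (mx_mult n A P) x i" .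
  qed
qed

lemma pow_nonneg:
  assumes "\<forall>i<n. \<forall>j<n. 0 \<le> A i j" "i < n" "j < n"
  shows "0 \<le> mx_pow n A k i j"
  using assms(2,3)
proof (induction k arbitrary: i j)
  case 0
  then show ?case by (simp add: mx_id_def)
next
  case (Suc k)
  have "0 \<le> mx_mult_vec n A (\<lambda>l. mx_pow n A k l j) i"
    using Suc assms(1) by (intro mult_vec_nonneg) auto
  then show ?case by (simp add: mx_mult_def mx_mult_vec_def)
qed

lemma mult_vec_pow_Suc:
  assumes "\<forall>i<n. \<forall>j<n. 0 \<le> A i j" "\<forall>j<n. 0 \<le> x j" "i < n"
  shows "mx_mult_vec n (mx_pow n A (Suc k)) x i
    = mx_mult_vec n A (mx_mult_vec n (mx_pow n A k) x) i"
proof -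
  have "\<forall>l<n. \<forall>j<n. 0 \<le> mx_pow n A k l j" using assms(1) pow_nonneg by blast
  then show ?thesis using assms by (simp add: mult_vec_mult)
qed

lemma mult_vec_pow_add:
  assumes A: "\<forall>i<n. \<forall>j<n. 0 \<le> A i j" and x: "\<forall>j<n. 0 \<le> x j" and "i < n"
  shows "mx_mult_vec n (mx_pow n A (m + k)) x i
    = mx_mult_vec n (mx_pow n A m) (mx_mult_vec n (mx_pow n A k) x) i"
  using \<open>i < n\<close>
proof (induction m arbitrary: i)
  case 0
  have "0 \<le> mx_mult_vec n (mx_pow n A k) x i"
    using 0 x pow_nonneg[OF A] by (intro mult_vec_nonneg) auto
  then show ?case using 0 by (simp add: mult_vec_id)
next
  case (Suc m)
  let ?y = "mx_mult_vec n (mx_pow n A k) x"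
  have y: "\<forall>j<n. 0 \<le> ?y j"
    using A x pow_nonneg[OF A] by (auto intro!: mult_vec_nonneg)
  have "mx_mult_vec n (mx_pow n A (Suc m + k)) x i
      = mx_mult_vec n A (mx_mult_vec n (mx_pow n A (m + k)) x) i"
    using mult_vec_pow_Suc[OF A x Suc.prems] by simp
  also have "\<dots> = mx_mult_vec n A (mx_mult_vec n (mx_pow n A m) ?y) i"
    using Suc.IH by (intro mult_vec_cong) auto
  also have "\<dots> = mx_mult_vec n (mx_pow n A (Suc m)) ?y i"
    using mult_vec_pow_Suc[OF A y Suc.prems] by simp
  finally show ?case .
qed

lemma pow_scale_le:
  assumes c: "0 \<le> c" and A: "\<forall>i<n. \<forall>j<n. 0 \<le> A i j" and AB: "\<forall>i<n. \<forall>j<n. c * A i j \<le> B i j"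
    and "i < n" "j < n"
  shows "c ^ k * mx_pow n A k i j \<le> mx_pow n B k i j"
  using \<open>i < n\<close>
proof (induction k arbitrary: i)
  case 0
  then show ?case by simp
next
  case (Suc k)
  have n: "0 < n" using Suc.prems by simp
  have B: "\<forall>i<n. \<forall>j<n. 0 \<le> B i j" using A AB c by (meson mult_nonneg_nonneg order_trans)
  let ?P = "\<lambda>l. mx_pow n A k l j" and ?Q = "\<lambda>l. mx_pow n B k l j"
  have "c ^ Suc k * mx_pow n A (Suc k) i j = c * mx_mult_vec n A (\<lambda>l. c ^ k * ?P l) i"
    using c n mult_vec_scale[of "c ^ k" n A ?P i] by (simp add: mx_mult_def mx_mult_vec_def)
  also have "\<dots> = mx_mult_vec n (\<lambda>i l. c * A i l) (\<lambda>l. c ^ k * ?P l) i"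
    using c n by (intro mult_vec_scale_mx[symmetric]) auto
  also have "\<dots> \<le> mx_mult_vec n B (\<lambda>l. c ^ k * ?P l) i"
    using n c AB Suc.prems \<open>j < n\<close> pow_nonneg[OF A] by (intro mult_vec_mono_mx) auto
  also have "\<dots> \<le> mx_mult_vec n B ?Q i"
    using n B Suc by (intro mult_vec_mono) auto
  also have "\<dots> = mx_pow n B (Suc k) i j" by (simp add: mx_mult_def mx_mult_vec_def)
  finally show ?case .
qed

subsection \<open>Powers of circulant matrices\<close>

lemma circ_shift: "i < n \<Longrightarrow> u < n \<Longrightarrow> circ n w i ((i + u) mod n) = w u"
proof -
  assume "i < n" "u < n"
  then have "((i + u) mod n + n - i) mod n = u"
  proof (cases "i + u < n")
    case False
    then have "(i + u) mod n = i + u - n" using \<open>i < n\<close> \<open>u < n\<close> by (simp add: le_mod_geq)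
    then show ?thesis using \<open>i < n\<close> \<open>u < n\<close> False by simp
  qed simp
  then show ?thesis by (simp add: circ_def)
qed

lemma circ_nonneg: "\<forall>u<n. 0 \<le> w u \<Longrightarrow> \<forall>i<n. \<forall>j<n. 0 \<le> circ n w i j"
  by (simp add: circ_def)

lemma circ_pow_ge_prod_mset:
  assumes w: "\<forall>u<n. 0 \<le> w u" and "set_mset C \<subseteq> {..<n}" "i < n"
  shows "(\<Prod>u\<in>#C. w u) \<le> mx_pow n (circ n w) (size C) i ((i + \<Sum>\<^sub># C) mod n)"
  using assms(2,3)
proof (induction C arbitrary: i)
  case empty
  then show ?case by (simp add: mx_id_def)
next
  case (add u C)
  define l where "l = (i + u) mod n"
  have u: "u < n" and l: "l < n" using add.prems by (auto simp: l_def)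
  have target: "(l + \<Sum>\<^sub># C) mod n = (i + \<Sum>\<^sub># (add_mset u C)) mod n"
    by (simp add: l_def mod_add_left_eq add.assoc)
  have "(\<Prod>v\<in>#add_mset u C. w v) = w u * (\<Prod>v\<in>#C. w v)" by simp
  also have "\<dots> \<le> circ n w i l * mx_pow n (circ n w) (size C) l ((l + \<Sum>\<^sub># C) mod n)"
    using add u w by (simp add: circ_shift l_def mult_left_mono)
  also have "\<dots> \<le> mx_pow n (circ n w) (size (add_mset u C)) i ((i + \<Sum>\<^sub># (add_mset u C)) mod n)"
    using l unfolding target by (simp add: mx_mult_def Max_lessThan_ge)
  finally show ?case .
qed

lemma circ_pow_attained:
  assumes w: "\<forall>u<n. 0 \<le> w u" and "i < n" "j < n"
  shows "mx_pow n (circ n w) k i j = 0 \<or>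
    (\<exists>C. set_mset C \<subseteq> {..<n} \<and> size C = k \<and> (i + \<Sum>\<^sub># C) mod n = j
       \<and> mx_pow n (circ n w) k i j = (\<Prod>u\<in>#C. w u))"
  using assms(2)
proof (induction k arbitrary: i)
  case 0
  then show ?case using \<open>j < n\<close> by (auto simp: mx_id_def intro: exI[of _ "{#}"])
next
  case (Suc k)
  have n: "0 < n" using Suc.prems by simp
  obtain l where l: "l < n"
    and pow_l: "mx_pow n (circ n w) (Suc k) i j = circ n w i l * mx_pow n (circ n w) k l j"
    using Max_lessThan_attained[OF n] by (auto simp: mx_mult_def)
  show ?case
  proof (cases "mx_pow n (circ n w) k l j = 0")
    case True
    then show ?thesis using pow_l by simp
  next
    case False
    then obtain C where C: "set_mset C \<subseteq> {..<n}" "size C = k" "(l + \<Sum>\<^sub># C) mod n = j"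
      "mx_pow n (circ n w) k l j = (\<Prod>u\<in>#C. w u)"
      using Suc.IH[OF l] by blast
    define u where "u = (l + n - i) mod n"
    have u: "u < n" using n by (simp add: u_def)
    have "(i + u) mod n = (i + (l + n - i)) mod n" by (simp add: u_def mod_add_right_eq)
    also have "i + (l + n - i) = l + n" using Suc.prems by simp
    finally have l_eq: "(i + u) mod n = l" using l by simp
    have "(i + \<Sum>\<^sub># (add_mset u C)) mod n = j"
      using C(3) l_eq by (metis sum_mset.add_mset add.assoc mod_add_left_eq)
    moreover have "mx_pow n (circ n w) (Suc k) i j = (\<Prod>v\<in>#add_mset u C. w v)"
      using pow_l C(4) circ_shift[OF Suc.prems u, of w] l_eq by simp
    ultimately show ?thesis using C(1,2) u by (intro disjI2 exI[of _ "add_mset u C"]) auto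
  qed
qed

lemma mset_count_pigeonhole:
  assumes "set_mset C \<subseteq> A" "finite A" "card A * m < size C"
  shows "\<exists>u\<in>A. m < count C u"
proof (rule ccontr)
  assume "\<not> ?thesis"
  then have bound: "\<forall>u\<in>A. count C u \<le> m" by auto
  have "size C = (\<Sum>u\<in>set_mset C. count C u)" by (simp add: size_multiset_overloaded_eq)
  also have "\<dots> \<le> (\<Sum>u\<in>A. count C u)" using assms(1,2) by (intro sum_mono2) auto
  also have "\<dots> \<le> card A * m" using bound sum_bounded_above[of A "count C" m] by simp
  finally show False using assms(3) by simp
qed

lemma circ_pow_period:
  assumes w: "\<forall>u<n. 0 \<le> w u \<and> w u \<le> M" and u0: "u0 < n" "w u0 = M"
    and L: "n * (n - 1) \<le> L" and ij: "i < n" "j < n"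
  shows "mx_pow n (circ n w) (L + n) i j = M ^ n * mx_pow n (circ n w) L i j"
proof -
  have w0: "\<forall>u<n. 0 \<le> w u" and M0: "0 \<le> M" using w u0 by auto
  let ?P = "mx_pow n (circ n w)"
  have P0: "0 \<le> ?P k i j" for k using pow_nonneg[OF circ_nonneg[OF w0] ij] .
  show ?thesis
  proof (rule antisym)
    show "?P (L + n) i j \<le> M ^ n * ?P L i j"
    proof (cases "?P (L + n) i j = 0")
      case True
      then show ?thesis using M0 P0 by simp
    next
      case False
      then obtain C where C: "set_mset C \<subseteq> {..<n}" "size C = L + n" "(i + \<Sum>\<^sub># C) mod n = j"
        "?P (L + n) i j = (\<Prod>u\<in>#C. w u)"
        using circ_pow_attained[OF w0 ij] by blast
      have "card {..<n} * (n - 1) < size C" using C(2) L ij by (cases n) auto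
      then obtain u where u: "u < n" "n \<le> count C u"
        using mset_count_pigeonhole[OF C(1)] by force
      define C' where "C' = C - replicate_mset n u"
      have C_split: "C = replicate_mset n u + C'"
        using u(2) by (simp add: C'_def count_le_replicate_mset_subset_eq)
      have "(i + \<Sum>\<^sub># C) mod n = (i + \<Sum>\<^sub># C' + u * n) mod n"
        by (simp add: C_split algebra_simps)
      then have C': "set_mset C' \<subseteq> {..<n}" "size C' = L" "(i + \<Sum>\<^sub># C') mod n = j"
        using C unfolding C_split by auto
      have "(\<Prod>v\<in>#C. w v) = w u ^ n * (\<Prod>v\<in>#C'. w v)" by (simp add: C_split)
      also have "\<dots> \<le> w u ^ n * ?P L i j"
        using circ_pow_ge_prod_mset[OF w0 C'(1) ij(1)] C'(2,3) w u by (simp add: mult_left_mono)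
      also have "\<dots> \<le> M ^ n * ?P L i j"
        using w u P0 by (intro mult_right_mono power_mono) auto
      finally show ?thesis using C(4) by simp
    qed
    show "M ^ n * ?P L i j \<le> ?P (L + n) i j"
    proof (cases "?P L i j = 0")
      case True
      then show ?thesis using P0 by simp
    next
      case False
      then obtain C where C: "set_mset C \<subseteq> {..<n}" "size C = L" "(i + \<Sum>\<^sub># C) mod n = j"
        "?P L i j = (\<Prod>u\<in>#C. w u)"
        using circ_pow_attained[OF w0 ij] by blast
      let ?C = "replicate_mset n u0 + C"
      have "(i + \<Sum>\<^sub># ?C) mod n = (i + \<Sum>\<^sub># C + u0 * n) mod n"
        by (simp add: algebra_simps)
      then have "set_mset ?C \<subseteq> {..<n}" "size ?C = L + n" "(i + \<Sum>\<^sub># ?C) mod n = j"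
        using C u0 by auto
      moreover have "(\<Prod>u\<in>#?C. w u) = M ^ n * ?P L i j" using C(4) u0 by simp
      ultimately show ?thesis using circ_pow_ge_prod_mset[OF w0, of ?C i] ij by (simp add: add.commute)
    qed
  qed
qed

lemma circ_lambda:
  assumes n: "0 < n" and w: "\<forall>u<n. 0 \<le> w u"
  shows "mx_lambda n (circ n w) = Max (w ` {..<n})"
proof -
  define M where "M = Max (w ` {..<n})"
  define g where "g cs = root (length cs) (\<Prod>t<length cs. circ n w (cs ! t) (cs ! ((t + 1) mod length cs)))"
    for cs
  define Cs where "Cs = {cs. set cs \<subseteq> {..<n} \<and> length cs \<le> n \<and> cs \<noteq> []}"
  have lambda_eq: "mx_lambda n (circ n w) = Max (g ` Cs)"
    unfolding mx_lambda_def g_def Cs_def by (rule arg_cong[where f = Max]) auto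
  have entry: "0 \<le> circ n w a b \<and> circ n w a b \<le> M" for a b
    using w n by (auto simp: circ_def M_def intro: Max_lessThan_ge)
  have M0: "0 \<le> M" using entry by (meson order_trans)
  obtain u where u: "u < n" "M = w u" using Max_lessThan_attained[OF n, of w] by (auto simp: M_def)
  show ?thesis
    unfolding lambda_eq M_def[symmetric]
  proof (rule Max_eqI)
    show "finite (g ` Cs)"
      by (rule finite_imageI, rule finite_subset[OF _ finite_lists_length_le[OF finite_lessThan[of n], of n]])
        (auto simp: Cs_def)
  next
    fix y assume "y \<in> g ` Cs"
    then obtain cs where cs: "cs \<in> Cs" "y = g cs" by auto
    then have len: "0 < length cs" by (auto simp: Cs_def)
    have "(\<Prod>t<length cs. circ n w (cs ! t) (cs ! ((t + 1) mod length cs))) \<le> M ^ length cs"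
      using prod_mono[of "{..<length cs}" "\<lambda>t. circ n w (cs ! t) (cs ! ((t + 1) mod length cs))" "\<lambda>_. M"]
        entry by simp
    then have "y \<le> root (length cs) (M ^ length cs)" using cs len by (simp add: g_def real_root_le_mono)
    then show "y \<le> M" using len M0 by (simp add: real_root_power_cancel)
  next
    \<comment> \<open>the cycle 0, u, 2u, ... (mod n) uses only the maximal weight w u\<close>
    define cs where "cs = map (\<lambda>t. (t * u) mod n) [0..<n]"
    have "circ n w (cs ! t) (cs ! ((t + 1) mod length cs)) = M" if t: "t < n" for t
    proof -
      have "cs ! ((t + 1) mod length cs) = ((t + 1) mod n * u) mod n" using n by (simp add: cs_def)
      also have "\<dots> = ((t + 1) * u) mod n" by (rule mod_mult_left_eq)
      also have "\<dots> = (t * u + u) mod n" by (simp add: algebra_simps)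
      also have "\<dots> = ((t * u) mod n + u) mod n" by (simp add: mod_add_left_eq)
      finally have "cs ! ((t + 1) mod length cs) = ((t * u) mod n + u) mod n" .
      then show ?thesis using circ_shift[of "(t * u) mod n" n u w] t n u by (simp add: cs_def)
    qed
    then have "g cs = M" using n M0 by (simp add: g_def cs_def real_root_power_cancel)
    moreover have "cs \<in> Cs" using n by (auto simp: cs_def Cs_def)
    ultimately show "M \<in> g ` Cs" by force
  qed
qed

lemma mult_vec_pow_scale_le:
  assumes r: "0 \<le> r" and A: "\<forall>i<n. \<forall>j<n. 0 \<le> A i j" and AB: "\<forall>i<n. \<forall>j<n. r * A i j \<le> B i j"
    and x: "\<forall>j<n. 0 \<le> x j" and "i < n"
  shows "r ^ k * mx_mult_vec n (mx_pow n A k) x i \<le> mx_mult_vec n (mx_pow n B k) x i"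
proof -
  have "r ^ k * mx_mult_vec n (mx_pow n A k) x i = mx_mult_vec n (\<lambda>i j. r ^ k * mx_pow n A k i j) x i"
    using r \<open>i < n\<close> by (intro mult_vec_scale_mx[symmetric]) auto
  also have "\<dots> \<le> mx_mult_vec n (mx_pow n B k) x i"
    using pow_scale_le[OF r A AB \<open>i < n\<close>] x \<open>i < n\<close> by (intro mult_vec_mono_mx) auto
  finally show ?thesis .
qed

subsection \<open>Attraction sets\<close>

lemma mult_vec_pow_geometric:
  assumes A: "\<forall>i<n. \<forall>j<n. 0 \<le> A i j" and x: "\<forall>j<n. 0 \<le> x j" and "0 \<le> c"
    and eigen: "\<forall>i<n. mx_mult_vec n (mx_pow n A (Suc t)) x i = c * mx_mult_vec n (mx_pow n A t) x i"
    and "i < n"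
  shows "mx_mult_vec n (mx_pow n A (t + m)) x i = c ^ m * mx_mult_vec n (mx_pow n A t) x i"
  using \<open>i < n\<close>
proof (induction m arbitrary: i)
  case 0
  then show ?case by simp
next
  case (Suc m)
  let ?y = "mx_mult_vec n (mx_pow n A t) x"
  have "mx_mult_vec n (mx_pow n A (t + Suc m)) x i
      = mx_mult_vec n A (mx_mult_vec n (mx_pow n A (t + m)) x) i"
    using mult_vec_pow_Suc[OF A x Suc.prems] by simp
  also have "\<dots> = mx_mult_vec n A (\<lambda>j. c ^ m * ?y j) i"
    using Suc.IH by (intro mult_vec_cong) auto
  also have "\<dots> = c ^ m * mx_mult_vec n A ?y i"
    using \<open>0 \<le> c\<close> Suc.prems by (intro mult_vec_scale) auto
  also have "\<dots> = c ^ Suc m * ?y i"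
    using mult_vec_pow_Suc[OF A x Suc.prems, of t] eigen Suc.prems by (simp del: mx_pow.simps)
  finally show ?case .
qed

lemma circ_pow_diag_ge:
  assumes w: "\<forall>u<n. 0 \<le> w u" and "u < n" "i < n"
  shows "w u ^ (n * m) \<le> mx_pow n (circ n w) (n * m) i i"
proof -
  have "(i + \<Sum>\<^sub># (replicate_mset (n * m) u)) mod n = (i + m * u * n) mod n"
    by (simp add: algebra_simps)
  then have "(i + \<Sum>\<^sub># (replicate_mset (n * m) u)) mod n = i"
    using \<open>i < n\<close> by simp
  then show ?thesis
    using circ_pow_ge_prod_mset[OF w, of "replicate_mset (n * m) u" i] assms(2,3) by simp
qed

lemma attr_circ_lower_bound:
  assumes n: "0 < n" and w: "\<forall>u<n. 0 \<le> w u" and pos: "0 < Max (w ` {..<n})"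
    and "x \<in> attr n (circ n w)"
  obtains t where "\<forall>k\<ge>t. \<forall>i<n. Max (w ` {..<n}) ^ k * x i \<le> mx_mult_vec n (mx_pow n (circ n w) k) x i"
proof -
  let ?lam = "Max (w ` {..<n})"
  let ?v = "\<lambda>k. mx_mult_vec n (mx_pow n (circ n w) k) x"
  have A: "\<forall>i<n. \<forall>j<n. 0 \<le> circ n w i j" using circ_nonneg[OF w] .
  obtain t where x: "\<forall>j<n. 0 \<le> x j" and t: "\<forall>i<n. ?v (Suc t) i = ?lam * ?v t i"
    using \<open>x \<in> attr n (circ n w)\<close> circ_lambda[OF n w] by (auto simp: attr_def)
  have geom: "?v (t + m) i = ?lam ^ m * ?v t i" if "i < n" for m i
    using mult_vec_pow_geometric[OF A x _ t that] pos by simp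
  have "?lam ^ k * x i \<le> ?v k i" if k: "t \<le> k" and i: "i < n" for k i
  proof -
    obtain u where u: "u < n" "w u = ?lam" using Max_lessThan_attained[OF n, of w] by auto
    \<comment> \<open>compare \<lambda>^(nk) x \<le> A^(nk) x (a diagonal walk) with A^(nk) x = \<lambda>^(nk-k) A^k x\<close>
    have kk: "k \<le> n * k" using n by simp
    have "?lam ^ (n * k) * x i \<le> mx_pow n (circ n w) (n * k) i i * x i"
      using circ_pow_diag_ge[OF w u(1) i, of k] u x i by (intro mult_right_mono) auto
    also have "\<dots> \<le> ?v (n * k) i" using i by (rule mult_vec_ge)
    also have "\<dots> = ?lam ^ (n * k - k) * ?v k i"
    proof -
      from kk have s1: "t + (n * k - t) = n * k" and s2: "n * k - t = (n * k - k) + (k - t)"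
        and s3: "t + (k - t) = k" using k by linarith+
      have "?v (n * k) i = ?lam ^ (n * k - t) * ?v t i" using geom[OF i, of "n * k - t"] unfolding s1 .
      also have "\<dots> = ?lam ^ (n * k - k) * (?lam ^ (k - t) * ?v t i)"
        unfolding s2 by (simp add: power_add)
      also have "?lam ^ (k - t) * ?v t i = ?v k i" using geom[OF i, of "k - t"] unfolding s3 ..
      finally show ?thesis .
    qed
    finally have "?lam ^ (n * k) * x i \<le> ?lam ^ (n * k - k) * ?v k i" .
    moreover have "?lam ^ (n * k) = ?lam ^ (n * k - k) * ?lam ^ k"
      using kk by (simp flip: power_add)
    ultimately have "?lam ^ (n * k - k) * (?lam ^ k * x i) \<le> ?lam ^ (n * k - k) * ?v k i"
      by (simp add: mult.assoc)
    then show ?thesis using pos by (simp add: mult_le_cancel_left_pos)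
  qed
  then show ?thesis using that by blast
qed

lemma circ_eigen_of_lower_bound:
  assumes h: "\<forall>u<n. 0 \<le> h u" and pos: "0 < Max (h ` {..<n})" and x: "\<forall>j<n. 0 \<le> x j"
    and lower: "\<forall>k\<ge>t. \<forall>i<n. Max (h ` {..<n}) ^ k * x i \<le> mx_mult_vec n (mx_pow n (circ n h) k) x i"
    and L: "n * (n - 1) \<le> L" and i: "i < n"
  shows "mx_mult_vec n (mx_pow n (circ n h) (L + 1)) x i
    = Max (h ` {..<n}) * mx_mult_vec n (mx_pow n (circ n h) L) x i"
proof -
  let ?mu = "Max (h ` {..<n})"
  let ?v = "\<lambda>k. mx_mult_vec n (mx_pow n (circ n h) k) x"
  have n: "0 < n" using i by simp
  have H: "\<forall>i<n. \<forall>j<n. 0 \<le> circ n h i j" using circ_nonneg[OF h] .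
  obtain u where u: "u < n" "h u = ?mu" using Max_lessThan_attained[OF n, of h] by auto
  have mono: "?mu ^ k * ?v M i \<le> ?v (M + k) i" if "t \<le> k" for M k
  proof -
    have "?mu ^ k * ?v M i = mx_mult_vec n (mx_pow n (circ n h) M) (\<lambda>j. ?mu ^ k * x j) i"
      using pos n by (simp add: mult_vec_scale)
    also have "\<dots> \<le> mx_mult_vec n (mx_pow n (circ n h) M) (?v k) i"
      using lower that n i pow_nonneg[OF H] by (intro mult_vec_mono) auto
    also have "\<dots> = ?v (M + k) i" using mult_vec_pow_add[OF H x i] by simp
    finally show ?thesis .
  qed
  have period: "?v (M + n * m) i = ?mu ^ (n * m) * ?v M i" if "n * (n - 1) \<le> M" for M m
  proof (rule mult_vec_scale_mx)
    show "\<forall>j<n. mx_pow n (circ n h) (M + n * m) i j = ?mu ^ (n * m) * mx_pow n (circ n h) M i j"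
    proof (induction m)
      case (Suc m)
      have "mx_pow n (circ n h) (M + n * m + n) i j = ?mu ^ n * mx_pow n (circ n h) (M + n * m) i j"
        if "j < n" for j
        using circ_pow_period[of n h ?mu u "M + n * m" i j] h u \<open>n * (n - 1) \<le> M\<close> i that
        by (auto intro: Max_lessThan_ge)
      then show ?case using Suc by (simp add: algebra_simps power_add)
    qed simp
  qed (use pos n in auto)
  \<comment> \<open>L + 1 + nt \<equiv> L + 1 and L + 1 + (nt + n - 1) \<equiv> L modulo n\<close>
  have "?mu ^ (n * t) * (?mu * ?v L i) \<le> ?mu ^ (n * t) * ?v (L + 1) i"
  proof -
    have "t \<le> n * t" using n by simp
    then have "t \<le> 1 + n * t" by linarith
    then have "?mu ^ (1 + n * t) * ?v L i \<le> ?v (L + 1 + n * t) i"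
      using mono[of "1 + n * t" L] by (simp only: add.assoc)
    also have "\<dots> = ?mu ^ (n * t) * ?v (L + 1) i" using period[of "L + 1" t] L by simp
    finally show ?thesis by (simp add: mult.assoc mult.left_commute)
  qed
  moreover have "?mu ^ (n * t + n - 1) * ?v (L + 1) i \<le> ?mu ^ (n * t + n - 1) * (?mu * ?v L i)"
  proof -
    have "t \<le> n * t" using n by simp
    then have k: "t \<le> n * t + n - 1" "L + 1 + (n * t + n - 1) = L + n * (t + 1)"
      using n by (linarith, simp)
    have "?mu ^ (n * t + n - 1) * ?v (L + 1) i \<le> ?v (L + n * (t + 1)) i"
      using mono[OF k(1), of "L + 1"] unfolding k(2) .
    also have "\<dots> = ?mu ^ (n * (t + 1)) * ?v L i" using period[OF L] .
    also have "?mu ^ (n * (t + 1)) = ?mu ^ (n * t + n - 1) * ?mu"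
      using n by (simp add: add.commute flip: power_Suc2)
    finally show ?thesis by (simp add: mult.assoc)
  qed
  ultimately show ?thesis using pos by (simp add: mult_le_cancel_left_pos)
qed

subsection \<open>Interval circulants\<close>

lemma itv_bounds: "y \<in> itv l u cl cr \<Longrightarrow> l \<le> y \<and> y \<le> u"
  by (auto simp: itv_def split: if_splits)

lemma hat_a_bounds:
  assumes "\<forall>t<n. 0 \<le> al t \<and> al t \<le> au t" "u < n"
  shows "0 \<le> hat_a n al au u \<and> hat_a n al au u \<le> Max (al ` {..<n})"
  using assms order_trans[OF _ Max_lessThan_ge[OF assms(2), of al]] by (auto simp: hat_a_def)

lemma Max_hat_a:
  assumes n: "0 < n" and al: "\<forall>t<n. 0 \<le> al t \<and> al t \<le> au t"
  shows "Max (hat_a n al au ` {..<n}) = Max (al ` {..<n})"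
proof (rule antisym)
  show "Max (hat_a n al au ` {..<n}) \<le> Max (al ` {..<n})"
    using hat_a_bounds[OF al] n by (simp add: Max_lessThan_le_iff)
  obtain k where k: "k < n" "Max (al ` {..<n}) = al k" using Max_lessThan_attained[OF n] by blast
  then have "hat_a n al au k = Max (al ` {..<n})" using al by (simp add: hat_a_def)
  then show "Max (al ` {..<n}) \<le> Max (hat_a n al au ` {..<n})"
    using Max_lessThan_ge[OF k(1), of "hat_a n al au"] by simp
qed

lemma hat_a_ge_scaled:
  assumes n: "0 < n" and a: "\<forall>t<n. 0 \<le> al t \<and> al t \<le> a t \<and> a t \<le> au t" and "u < n"
  shows "Max (al ` {..<n}) / Max (a ` {..<n}) * a u \<le> hat_a n al au u"
proof -
  let ?mu = "Max (al ` {..<n})" and ?lam = "Max (a ` {..<n})"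
  have mu0: "0 \<le> ?mu" using a n Max_lessThan_ge[OF n, of al] by (meson order_trans)
  have mu_lam: "?mu \<le> ?lam" using a n by (auto simp: Max_lessThan_le_iff intro: order_trans[OF _ Max_lessThan_ge])
  have au: "a u \<le> ?lam" "0 \<le> a u" "a u \<le> au u" using a \<open>u < n\<close> Max_lessThan_ge by fastforce+
  have "?mu / ?lam * a u \<le> ?mu / ?lam * ?lam" using au mu0 by (intro mult_left_mono) auto
  also have "\<dots> \<le> ?mu" using mu0 by (cases "?lam = 0") auto
  moreover have "?mu / ?lam \<le> 1" using mu0 mu_lam by (cases "?lam = 0") (auto simp: divide_le_eq_1)
  then have "?mu / ?lam * a u \<le> a u" using au mult_right_mono[of "?mu / ?lam" 1 "a u"] by simp
  ultimately show ?thesis using au by (simp add: hat_a_def)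
qed

lemma attr_circ_imp_hat_eigen:
  assumes n: "0 < n" and a: "\<forall>t<n. 0 \<le> al t \<and> al t \<le> a t \<and> a t \<le> au t"
    and attr: "x \<in> attr n (circ n a)" and L: "n * (n - 1) \<le> L" and i: "i < n"
  shows "mx_mult_vec n (mx_pow n (circ n (hat_a n al au)) (L + 1)) x i
    = Max (al ` {..<n}) * mx_mult_vec n (mx_pow n (circ n (hat_a n al au)) L) x i"
proof -
  let ?h = "hat_a n al au" and ?mu = "Max (al ` {..<n})" and ?lam = "Max (a ` {..<n})"
  have al: "\<forall>t<n. 0 \<le> al t \<and> al t \<le> au t" using a by fastforce
  have h: "\<forall>u<n. 0 \<le> ?h u" using hat_a_bounds[OF al] by blast
  have a0: "\<forall>u<n. 0 \<le> a u" using a by fastforce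
  have x: "\<forall>j<n. 0 \<le> x j" using attr by (simp add: attr_def)
  show ?thesis
  proof (cases "?mu = 0")
    case True
    have "mx_mult_vec n (circ n ?h) y i = 0" for y
    proof -
      have "\<forall>u<n. ?h u = 0" using hat_a_bounds[OF al] True by force
      then have "\<forall>j<n. circ n ?h i j = 0" using n by (simp add: circ_def)
      then show ?thesis using mult_vec_ge[of 0 n "circ n ?h" i y] n
        by (intro antisym mult_vec_le) auto
    qed
    then show ?thesis using mult_vec_pow_Suc[OF circ_nonneg[OF h] x i, of L] True by simp
  next
    case False
    then have mu: "0 < ?mu" using hat_a_bounds[OF al n] by linarith
    have "?mu \<le> ?lam" using a n by (auto simp: Max_lessThan_le_iff intro: order_trans[OF _ Max_lessThan_ge])
    then have lam: "0 < ?lam" using mu by linarith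
    obtain t where lower_a: "\<forall>k\<ge>t. \<forall>i<n. ?lam ^ k * x i \<le> mx_mult_vec n (mx_pow n (circ n a) k) x i"
      using attr_circ_lower_bound[OF n a0 lam attr] by blast
    have "?mu ^ k * x i \<le> mx_mult_vec n (mx_pow n (circ n ?h) k) x i" if "t \<le> k" "i < n" for k i
    proof -
      have scaled: "\<forall>i<n. \<forall>j<n. ?mu / ?lam * circ n a i j \<le> circ n ?h i j"
        using hat_a_ge_scaled[OF n a] by (simp add: circ_def)
      have "?mu ^ k * x i = (?mu / ?lam) ^ k * (?lam ^ k * x i)"
        using lam by (simp add: power_divide)
      also have "\<dots> \<le> (?mu / ?lam) ^ k * mx_mult_vec n (mx_pow n (circ n a) k) x i"
        using lower_a that mu lam by (intro mult_left_mono) auto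
      also have "\<dots> \<le> mx_mult_vec n (mx_pow n (circ n ?h) k) x i"
        using mu lam circ_nonneg[OF a0] scaled x that by (intro mult_vec_pow_scale_le) auto
      finally show ?thesis .
    qed
    then show ?thesis
      using circ_eigen_of_lower_bound[OF h, of x t L i] Max_hat_a[OF n al] mu x L i by simp
  qed
qed

theorem theorem4:
  fixes n :: nat
    and xl xu :: "nat \<Rightarrow> real" and xcl xcr :: "nat \<Rightarrow> bool"
    and al au :: "nat \<Rightarrow> real" and acl acr :: "nat \<Rightarrow> bool"
  assumes n: "n \<ge> 1"
    and X: "\<forall>i<n. nonneg_itv (xl i) (xu i) (xcl i) (xcr i)"
    and IC: "\<forall>t<n. nonneg_itv (al t) (au t) (acl t) (acr t)"
    and hat_in: "\<forall>t<n. hat_a n al au t \<in> itv (al t) (au t) (acl t) (acr t)"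
  shows "(\<exists>a x. (\<forall>t<n. a t \<in> itv (al t) (au t) (acl t) (acr t))
               \<and> (\<forall>i<n. x i \<in> itv (xl i) (xu i) (xcl i) (xcr i))
               \<and> x \<in> attr n (circ n a))
     \<longleftrightarrow>
         (\<exists>x. (\<forall>i<n. x i \<in> itv (xl i) (xu i) (xcl i) (xcr i))
              \<and> (\<forall>i<n. mx_lambda n (circ n (hat_a n al au))
                         * mx_mult_vec n (mx_pow n (circ n (hat_a n al au)) (n^2)) x i
                       = mx_mult_vec n (mx_pow n (circ n (hat_a n al au)) (n^2 + 1)) x i))"
    (is "?robust \<longleftrightarrow> (\<exists>x. ?in_X x \<and> ?eigen x)")
proof -
  have n0: "0 < n" using n by simp
  have al: "\<forall>t<n. 0 \<le> al t \<and> al t \<le> au t" using IC by (simp add: nonneg_itv_def)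
  have lambda_hat: "mx_lambda n (circ n (hat_a n al au)) = Max (al ` {..<n})"
    using circ_lambda[OF n0] hat_a_bounds[OF al] Max_hat_a[OF n0 al] by simp
  have L: "n * (n - 1) \<le> n ^ 2" by (simp add: power2_eq_square)
  show ?thesis
  proof
    assume ?robust
    then obtain a x where a: "\<forall>t<n. a t \<in> itv (al t) (au t) (acl t) (acr t)"
      and x: "?in_X x" and attr: "x \<in> attr n (circ n a)" by blast
    have "\<forall>t<n. 0 \<le> al t \<and> al t \<le> a t \<and> a t \<le> au t" using a al itv_bounds by fastforce
    then have "?eigen x" using attr_circ_imp_hat_eigen[OF n0 _ attr L] lambda_hat by simp
    then show "\<exists>x. ?in_X x \<and> ?eigen x" using x by blast
  next
    assume "\<exists>x. ?in_X x \<and> ?eigen x"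
    then obtain x where x: "?in_X x" and eigen: "?eigen x" by blast
    have "\<forall>i<n. 0 \<le> x i" using x X itv_bounds by (fastforce simp: nonneg_itv_def)
    then have "x \<in> attr n (circ n (hat_a n al au))"
      using eigen by (auto simp: attr_def intro!: exI[of _ "n^2"])
    then show ?robust using hat_in x by blast
  qed
qed

end
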